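(* Let $G=(V,E)$ be a finite graph with maximum vertex degree $\Delta(G)$, and let $A$ be an abelian group. If $|A|>|V|+|E|\,\Delta(G)-1$, then $G$ is $A$-cordial.
   Context: Graphs are finite, simple and undirected. For an abelian group $A$ and a graph $G=(V,E)$, a vertex labeling $\ell:V\to A$ induces an edge labeling $\ell(\{v_1,v_2\})=\ell(v_1)+\ell(v_2)$. Let $f_V(a)=|\{v\in V:\ell(v)=a\}|$ and $f_E(a)=|\{e\in E:\ell(e)=a\}|$. The labeling is $A$-cordial if $|f_V(a_1)-f_V(a_2)|\le 1$ and $|f_E(a_1)-f_E(a_2)|\le 1$ for all $a_1,a_2\in A$; $G$ is $A$-cordial if it admits an $A$-cordial labeling. *)

theory Defs
  imports Main
begin

definition simple_graph :: "'v set \<Rightarrow> 'v set set \<Rightarrow> bool" where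
  "simple_graph V E \<longleftrightarrow> finite V \<and> (\<forall>e\<in>E. e \<subseteq> V \<and> card e = 2)"

definition degree :: "'v set set \<Rightarrow> 'v \<Rightarrow> nat" where
  "degree E v = card {e\<in>E. v \<in> e}"

definition max_degree :: "'v set \<Rightarrow> 'v set set \<Rightarrow> nat" where
  "max_degree V E = (if V = {} then 0 else Max (degree E ` V))"

definition edge_label :: "('v \<Rightarrow> 'a::ab_group_add) \<Rightarrow> 'v set \<Rightarrow> 'a" where
  "edge_label l e = (\<Sum>v\<in>e. l v)"

definition f_V :: "'v set \<Rightarrow> ('v \<Rightarrow> 'a::ab_group_add) \<Rightarrow> 'a \<Rightarrow> nat" where
  "f_V V l a = card {v\<in>V. l v = a}"

definition f_E :: "'v set set \<Rightarrow> ('v \<Rightarrow> 'a::ab_group_add) \<Rightarrow> 'a \<Rightarrow> nat" where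
  "f_E E l a = card {e\<in>E. edge_label l e = a}"

definition cordial_labeling :: "'v set \<Rightarrow> 'v set set \<Rightarrow> ('v \<Rightarrow> 'a::ab_group_add) \<Rightarrow> bool" where
  "cordial_labeling V E l \<longleftrightarrow>
     (\<forall>a1 a2. \<bar>int (f_V V l a1) - int (f_V V l a2)\<bar> \<le> 1 \<and>
              \<bar>int (f_E E l a1) - int (f_E E l a2)\<bar> \<le> 1)"

text \<open>G = (V,E) is A-cordial, where A is the (finite) abelian group given by the type 'a.\<close>
definition A_cordial :: "'a::ab_group_add itself \<Rightarrow> 'v set \<Rightarrow> 'v set set \<Rightarrow> bool" where
  "A_cordial _ V E \<longleftrightarrow> (\<exists>l :: 'v \<Rightarrow> 'a. cordial_labeling V E l)"

end

theory Submission
  imports Defs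
begin

text \<open>
  A labeling that is injective on the vertices and whose induced edge labeling is injective on
  the edges is cordial, since every label is then used at most once.  Such a labeling is built
  greedily, one vertex at a time.  When a new vertex x is added to the labelled set F, its label a
  must avoid the labels of F and, for every already labelled neighbour u of x and every edge
  label c inside F, the value c - l u, so that the new edge label a + l u is fresh.  At most
  |F| + \<Delta>(G) |E| < |V| + \<Delta>(G) |E| \<le> |A| values are excluded.
\<close>

definition induced_edges :: "'v set set \<Rightarrow> 'v set \<Rightarrow> 'v set set" where
  "induced_edges E S = {e\<in>E. e \<subseteq> S}"

definition neighbours :: "'v set set \<Rightarrow> 'v \<Rightarrow> 'v set" where
  "neighbours E x = {u. {x, u} \<in> E}"

lemma simple_graph_finite_edges:
  assumes "simple_graph V E"
  shows "finite E"
proof (rule finite_subset)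
  show "E \<subseteq> Pow V" using assms by (auto simp: simple_graph_def)
  show "finite (Pow V)" using assms by (simp add: simple_graph_def)
qed

lemma finite_neighbours:
  assumes "finite E"
  shows "finite (neighbours E x)"
proof (rule finite_imageD)
  show "finite ((\<lambda>u. {x, u}) ` neighbours E x)"
    using assms by (rule finite_subset[rotated]) (auto simp: neighbours_def)
  show "inj_on (\<lambda>u. {x, u}) (neighbours E x)" by (auto simp: inj_on_def doubleton_eq_iff)
qed

lemma card_neighbours_le_degree:
  assumes "finite E"
  shows "card (neighbours E x) \<le> degree E x"
  unfolding degree_def
proof (rule card_inj_on_le)
  show "inj_on (\<lambda>u. {x, u}) (neighbours E x)" by (auto simp: inj_on_def doubleton_eq_iff)
  show "(\<lambda>u. {x, u}) ` neighbours E x \<subseteq> {e\<in>E. x \<in> e}" by (auto simp: neighbours_def)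
  show "finite {e\<in>E. x \<in> e}" using assms by simp
qed

lemma degree_le_max_degree:
  assumes "finite V" "x \<in> V"
  shows "degree E x \<le> max_degree V E"
  using assms by (auto simp: max_degree_def)

lemma induced_edges_insert:
  assumes "\<forall>e\<in>E. card e = 2"
  shows "induced_edges E (insert x F) =
         induced_edges E F \<union> (\<lambda>u. {x, u}) ` (neighbours E x \<inter> F)"
proof (intro equalityI subsetI)
  fix e assume e: "e \<in> induced_edges E (insert x F)"
  show "e \<in> induced_edges E F \<union> (\<lambda>u. {x, u}) ` (neighbours E x \<inter> F)"
  proof (cases "x \<in> e")
    case True
    from e assms obtain p q where "e = {p, q}" "p \<noteq> q"
      by (auto simp: induced_edges_def card_2_iff)
    with True obtain u where "e = {x, u}" "u \<noteq> x" by auto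
    with e show ?thesis by (auto simp: induced_edges_def neighbours_def)
  next
    case False
    with e show ?thesis by (auto simp: induced_edges_def)
  qed
qed (auto simp: induced_edges_def neighbours_def)

lemma edge_label_doubleton:
  assumes "x \<noteq> u"
  shows "edge_label l {x, u} = l x + l u"
  using assms by (simp add: edge_label_def)

lemma edge_label_cong:
  assumes "\<And>v. v \<in> e \<Longrightarrow> l v = l' v"
  shows "edge_label l e = edge_label l' e"
  unfolding edge_label_def using assms by (rule sum.cong[OF refl])

lemma card_fibre_le_one:
  assumes "inj_on f A"
  shows "card {x\<in>A. f x = a} \<le> 1"
proof -
  have "{x\<in>A. f x = a} \<subseteq> {the_inv_into A f a}"
    using assms by (auto simp: the_inv_into_f_f)
  then show ?thesis using card_mono[of "{the_inv_into A f a}"] by simp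
qed

lemma extend_injective_labeling:
  fixes l :: "'v \<Rightarrow> 'a::ab_group_add"
  assumes edges: "\<forall>e\<in>E. card e = 2" and "x \<notin> F"
    and inj_l: "inj_on l F" and inj_el: "inj_on (edge_label l) (induced_edges E F)"
    and fresh_vertex: "a \<notin> l ` F"
    and fresh_edges: "\<And>u e. u \<in> neighbours E x \<inter> F \<Longrightarrow> e \<in> induced_edges E F \<Longrightarrow>
                        a + l u \<noteq> edge_label l e"
  shows "inj_on (l(x := a)) (insert x F) \<and>
         inj_on (edge_label (l(x := a))) (induced_edges E (insert x F))"
proof
  let ?l' = "l(x := a)"
  let ?N = "neighbours E x \<inter> F"
  show "inj_on ?l' (insert x F)"
    using inj_l fresh_vertex \<open>x \<notin> F\<close> by (auto simp: inj_on_def)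
  have old: "edge_label ?l' e = edge_label l e" if "e \<in> induced_edges E F" for e
    using that \<open>x \<notin> F\<close> by (intro edge_label_cong) (auto simp: induced_edges_def)
  have new: "edge_label ?l' {x, u} = a + l u" if "u \<in> ?N" for u
    using that \<open>x \<notin> F\<close> by (subst edge_label_doubleton) auto
  have "inj_on (edge_label ?l') (induced_edges E F)"
    using inj_el old by (simp add: inj_on_def)
  moreover have "inj_on (edge_label ?l') ((\<lambda>u. {x, u}) ` ?N)"
    using inj_l new by (intro inj_on_imageI) (auto simp: inj_on_def)
  moreover have "edge_label ?l' ` induced_edges E F \<inter> edge_label ?l' ` (\<lambda>u. {x, u}) ` ?N = {}"
  proof -
    have "edge_label ?l' e \<noteq> edge_label ?l' {x, u}" if "e \<in> induced_edges E F" "u \<in> ?N" for e u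
      using fresh_edges[OF that(2,1)] old[OF that(1)] new[OF that(2)] by simp
    then show ?thesis by blast
  qed
  ultimately show "inj_on (edge_label ?l') (induced_edges E (insert x F))"
    unfolding induced_edges_insert[OF edges] inj_on_Un by blast
qed

lemma exists_avoiding_sums:
  fixes X U Y :: "'a::{ab_group_add,finite} set"
  assumes "card X + card U * card Y < card (UNIV :: 'a set)"
  shows "\<exists>a. a \<notin> X \<and> (\<forall>u\<in>U. \<forall>c\<in>Y. a + u \<noteq> c)"
proof -
  let ?D = "(\<lambda>(u, c). c - u) ` (U \<times> Y)"
  have "card (X \<union> ?D) \<le> card X + card U * card Y"
    using card_Un_le[of X ?D] card_image_le[of "U \<times> Y" "\<lambda>(u, c). c - u"]
    by (simp add: card_cartesian_product)
  with assms have "X \<union> ?D \<noteq> UNIV" by auto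
  then obtain a where a: "a \<notin> X \<union> ?D" by blast
  have "a + u \<noteq> c" if "u \<in> U" "c \<in> Y" for u c
  proof
    assume "a + u = c"
    then have "a = c - u" by (simp add: eq_diff_eq)
    with that have "a \<in> ?D" by force
    with a show False by blast
  qed
  with a show ?thesis by blast
qed

lemma exists_injective_labeling:
  assumes G: "simple_graph V E" and "finite S" "S \<subseteq> V"
    and size: "card V + card E * max_degree V E \<le> card (UNIV :: ('a::{ab_group_add,finite}) set)"
  shows "\<exists>l :: 'v \<Rightarrow> 'a. inj_on l S \<and> inj_on (edge_label l) (induced_edges E S)"
  using \<open>finite S\<close> \<open>S \<subseteq> V\<close>
proof (induction S rule: finite_induct)
  case empty
  then show ?case by (auto simp: inj_on_def induced_edges_def)
next
  case (insert x F)
  then obtain l :: "'v \<Rightarrow> 'a" where inj_l: "inj_on l F"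
    and inj_el: "inj_on (edge_label l) (induced_edges E F)" by auto
  have finV: "finite V" and edges: "\<forall>e\<in>E. card e = 2"
    using G by (auto simp: simple_graph_def)
  have finE: "finite E" using G by (rule simple_graph_finite_edges)
  let ?N = "neighbours E x \<inter> F" and ?EF = "induced_edges E F"
  have "card (l ` ?N) \<le> card (neighbours E x)"
    using finite_neighbours[OF finE] by (intro card_image_le[THEN order_trans] card_mono) auto
  also have "\<dots> \<le> max_degree V E"
    using card_neighbours_le_degree[OF finE] degree_le_max_degree[OF finV] insert.prems
    by (meson insert_subset le_trans)
  finally have "card (l ` ?N) * card (edge_label l ` ?EF) \<le> max_degree V E * card E"
    using card_image_le[of ?EF "edge_label l"] card_mono[OF finE, of ?EF] finE
    by (intro mult_mono) (auto simp: induced_edges_def)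
  moreover have "card (l ` F) < card V"
  proof -
    have "F \<subset> V" using insert.hyps(2) insert.prems by auto
    then show ?thesis
      by (rule le_less_trans[OF card_image_le[OF insert.hyps(1)] psubset_card_mono[OF finV]])
  qed
  ultimately have "card (l ` F) + card (l ` ?N) * card (edge_label l ` ?EF) < card (UNIV :: 'a set)"
    using size by (simp add: mult.commute)
  then obtain a where fresh_vertex: "a \<notin> l ` F"
    and fresh: "\<forall>u\<in>l ` ?N. \<forall>c\<in>edge_label l ` ?EF. a + u \<noteq> c"
    by (blast dest: exists_avoiding_sums)
  have fresh_edges: "a + l u \<noteq> edge_label l e" if "u \<in> ?N" "e \<in> ?EF" for u e
    using fresh that by blast
  have "inj_on (l(x := a)) (insert x F) \<and>
      inj_on (edge_label (l(x := a))) (induced_edges E (insert x F))"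
    using fresh_vertex fresh_edges
    by (rule extend_injective_labeling[OF edges insert.hyps(2) inj_l inj_el])
  then show ?case by blast
qed

lemma cordial_labeling_if_injective:
  assumes "inj_on l V" "inj_on (edge_label l) E"
  shows "cordial_labeling V E l"
proof -
  have "f_V V l a \<le> 1" "f_E E l a \<le> 1" for a
    unfolding f_V_def f_E_def by (intro card_fibre_le_one assms)+
  moreover have "\<bar>int m - int n\<bar> \<le> 1" if "m \<le> 1" "n \<le> 1" for m n :: nat
    using that by linarith
  ultimately show ?thesis by (simp add: cordial_labeling_def)
qed

theorem theorem3p2:
  fixes V :: "'v set" and E :: "'v set set"
  assumes "simple_graph V E"
    and "int (card (UNIV :: ('a::{ab_group_add,finite}) set)) > int (card V) + int (card E) * int (max_degree V E) - 1"
  shows "A_cordial TYPE('a) V E"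
proof -
  have size: "card V + card E * max_degree V E \<le> card (UNIV :: 'a set)"
    using assms(2) by (simp flip: of_nat_mult of_nat_add)
  have "finite V" using assms(1) by (simp add: simple_graph_def)
  then obtain l :: "'v \<Rightarrow> 'a" where "inj_on l V" "inj_on (edge_label l) (induced_edges E V)"
    using exists_injective_labeling[OF assms(1) _ subset_refl size] by blast
  moreover have "induced_edges E V = E"
    using assms(1) by (auto simp: induced_edges_def simple_graph_def)
  ultimately show ?thesis
    unfolding A_cordial_def using cordial_labeling_if_injective by metis
qed

end
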